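(* Let $G$ be a mean-payoff game with limited-observation and $\Gamma_G$ its associated reachability game. If $\lambda$ is a winning strategy for Adam or for Eve in $\Gamma_G$, then there exists $N\in\mathbb{N}$ such that every play $\pi$ in $\Gamma_G$ consistent with $\lambda$ has length $|\pi|\le N$.
   Context: An MPG with limited-observation is a tuple $G=\langle Q,q_I,\Sigma,\Delta,w,Obs\rangle$: $Q$ finite, $q_I\in Q$, $\Sigma$ finite, $\Delta\subseteq Q\times\Sigma\times Q$ total, $w:\Delta\to\mathbb{Z}$, $Obs$ a partition of $Q$ with $\{q_I\}\in Obs$ and $\mathrm{post}_\sigma(o)=\{q':\exists q\in o,(q,\sigma,q')\in\Delta\}$ a union of elements of $Obs$ for all $o,\sigma$. Reachability game $\Gamma_G$: $\mathcal{F}$ is the set of $f:Q\to\mathbb{Z}\cup\{+\infty,\bot\}$, $\mathrm{supp}(f)=\{q:f(q)\ne\bot\}$; $f'$ is a $\sigma$-successor of $f$ if $\mathrm{supp}(f')\in Obs$, $\mathrm{supp}(f')\subseteq\mathrm{post}_\sigma(\mathrm{supp}(f))$ and each $f'(q)$, $q\in\mathrm{supp}(f')$, is $\min\{f(q')+w(q',\sigma,q):q'\in\mathrm{supp}(f),(q',\sigma,q)\in\Delta\}$ or $+\infty$. $f\preceq_k f'$ iff $\mathrm{supp}(f)=\mathrm{supp}(f')$ and $f(q)+k\le f'(q)$ on the support ($+\infty+k=+\infty$). $f_I(q_I)=0$, else $\bot$. $\Pi_G$: sequences $f_0\sigma_0\ldots f_n$ with $f_0=f_I$, $f_{i+1}$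 a $\sigma_i$-successor of $f_i$, and $f_i\not\preceq_0f_j$, $f_j\not\preceq_1 f_i$ for $0\le i<j<n$. $\mathcal{T}_\exists$: such sequences with $f_i\preceq_0 f_n$ for some $i<n$; $\mathcal{T}_\forall$: such sequences with, for some $i<n$, $f_n\preceq_1 f_i$ and $f_i(q)\ne+\infty$ for some $q\in\mathrm{supp}(f_i)$. $\Gamma_G$ is played on the tree $\Pi_G$ from $f_I$: at the current sequence $x$, Eve picks $\sigma\in\Sigma$ and Adam picks $f$ with $x\sigma f\in\Pi_G$; the play stops (as a finite play) once it reaches $\mathcal{T}_\exists$ (Eve wins) or $\mathcal{T}_\forall$ (Adam wins); otherwise it may be infinite and won by nobody. A strategy is winning for Eve (Adam) if every play consistent with it reaches $\mathcal{T}_\exists$ ($\mathcal{T}_\forall$). *)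

theory Defs
  imports Main
begin

record ('q, 'a) mpg =
  Q     :: "'q set"
  qI    :: 'q
  Sig   :: "'a set"
  Delta :: "('q \<times> 'a \<times> 'q) set"
  w     :: "'q \<times> 'a \<times> 'q \<Rightarrow> int"
  Obs   :: "'q set set"

definition post :: "('q, 'a, 'z) mpg_scheme \<Rightarrow> 'a \<Rightarrow> 'q set \<Rightarrow> 'q set" where
  "post G \<sigma> S = {q'. \<exists>q\<in>S. (q, \<sigma>, q') \<in> Delta G}"

definition mpg_lo :: "('q, 'a, 'z) mpg_scheme \<Rightarrow> bool" where
  "mpg_lo G \<longleftrightarrow>
     finite (Q G) \<and> qI G \<in> Q G \<and> finite (Sig G) \<and>
     Delta G \<subseteq> Q G \<times> Sig G \<times> Q G \<and>
     (\<forall>q\<in>Q G. \<forall>\<sigma>\<in>Sig G. \<exists>q'. (q, \<sigma>, q') \<in> Delta G) \<and>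
     (\<forall>ob\<in>Obs G. ob \<noteq> {}) \<and> \<Union>(Obs G) = Q G \<and>
     (\<forall>o1\<in>Obs G. \<forall>o2\<in>Obs G. o1 \<noteq> o2 \<longrightarrow> o1 \<inter> o2 = {}) \<and>
     {qI G} \<in> Obs G \<and>
     (\<forall>ob\<in>Obs G. \<forall>\<sigma>\<in>Sig G. \<exists>S\<subseteq>Obs G. post G \<sigma> ob = \<Union>S)"

text \<open>Values in Z \<union> {+\<infinity>}; the value \<bottom> is represented by None.\<close>
datatype val = Fin int | PInf

fun vadd :: "val \<Rightarrow> int \<Rightarrow> val" where
  "vadd (Fin a) k = Fin (a + k)"
| "vadd PInf k = PInf"

fun vle :: "val \<Rightarrow> val \<Rightarrow> bool" where
  "vle (Fin a) (Fin b) = (a \<le> b)"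
| "vle _ PInf = True"
| "vle PInf (Fin _) = False"

type_synonym 'q fn = "'q \<Rightarrow> val option"

definition supp :: "'q fn \<Rightarrow> 'q set" where
  "supp f = {q. f q \<noteq> None}"

definition cands :: "('q, 'a, 'z) mpg_scheme \<Rightarrow> 'a \<Rightarrow> 'q fn \<Rightarrow> 'q \<Rightarrow> val set" where
  "cands G \<sigma> f q = {vadd v (w G (q', \<sigma>, q)) | q' v. f q' = Some v \<and> (q', \<sigma>, q) \<in> Delta G}"

definition is_min :: "val \<Rightarrow> val set \<Rightarrow> bool" where
  "is_min v S \<longleftrightarrow> v \<in> S \<and> (\<forall>u\<in>S. vle v u)"

definition succ :: "('q, 'a, 'z) mpg_scheme \<Rightarrow> 'a \<Rightarrow> 'q fn \<Rightarrow> 'q fn \<Rightarrow> bool" where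
  "succ G \<sigma> f f' \<longleftrightarrow>
     supp f' \<in> Obs G \<and> supp f' \<subseteq> post G \<sigma> (supp f) \<and>
     (\<forall>q\<in>supp f'. f' q = Some PInf \<or> (\<exists>v. f' q = Some v \<and> is_min v (cands G \<sigma> f q)))"

definition preceq :: "int \<Rightarrow> 'q fn \<Rightarrow> 'q fn \<Rightarrow> bool" where
  "preceq k f f' \<longleftrightarrow> supp f = supp f' \<and>
     (\<forall>q\<in>supp f. \<exists>a b. f q = Some a \<and> f' q = Some b \<and> vle (vadd a k) b)"

definition fI :: "('q, 'a, 'z) mpg_scheme \<Rightarrow> 'q fn" where
  "fI G = (\<lambda>q. if q = qI G then Some (Fin 0) else None)"

text \<open>A node f_0 \<sigma>_0 f_1 ... \<sigma>_{n-1} f_n of the tree (with f_0 = f_I) is represented by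
  the list [(\<sigma>_0,f_1), ..., (\<sigma>_{n-1},f_n)]; its length is n.\<close>
type_synonym ('q, 'a) node = "('a \<times> 'q fn) list"

definition fseq :: "('q, 'a, 'z) mpg_scheme \<Rightarrow> ('q, 'a) node \<Rightarrow> nat \<Rightarrow> 'q fn" where
  "fseq G x i = (if i = 0 then fI G else snd (x ! (i - 1)))"

definition inPi :: "('q, 'a, 'z) mpg_scheme \<Rightarrow> ('q, 'a) node \<Rightarrow> bool" where
  "inPi G x \<longleftrightarrow>
     (\<forall>i<length x. fst (x ! i) \<in> Sig G \<and> succ G (fst (x ! i)) (fseq G x i) (fseq G x (Suc i))) \<and>
     (\<forall>i j. i < j \<and> j < length x \<longrightarrow>
        \<not> preceq 0 (fseq G x i) (fseq G x j) \<and> \<not> preceq 1 (fseq G x j) (fseq G x i))"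

definition TE :: "('q, 'a, 'z) mpg_scheme \<Rightarrow> ('q, 'a) node \<Rightarrow> bool" where
  "TE G x \<longleftrightarrow> inPi G x \<and> (\<exists>i<length x. preceq 0 (fseq G x i) (fseq G x (length x)))"

definition TA :: "('q, 'a, 'z) mpg_scheme \<Rightarrow> ('q, 'a) node \<Rightarrow> bool" where
  "TA G x \<longleftrightarrow> inPi G x \<and> (\<exists>i<length x. preceq 1 (fseq G x (length x)) (fseq G x i) \<and>
                                 (\<exists>q\<in>supp (fseq G x i). fseq G x i q \<noteq> Some PInf))"

text \<open>Plays consistent with a strategy; the strategy is encoded as a predicate
  ok x \<sigma> f saying that extending the history x by (\<sigma>, f) agrees with the strategy.\<close>
definition cons_path :: "('q, 'a, 'z) mpg_scheme \<Rightarrow> (('q, 'a) node \<Rightarrow> 'a \<Rightarrow> 'q fn \<Rightarrow> bool)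
    \<Rightarrow> ('q, 'a) node \<Rightarrow> bool" where
  "cons_path G ok x \<longleftrightarrow> inPi G x \<and>
     (\<forall>k<length x. ok (take k x) (fst (x ! k)) (snd (x ! k))) \<and>
     (\<forall>k<length x. \<not> TE G (take k x) \<and> \<not> TA G (take k x))"

definition fin_play :: "('q, 'a, 'z) mpg_scheme \<Rightarrow> (('q, 'a) node \<Rightarrow> 'a \<Rightarrow> 'q fn \<Rightarrow> bool)
    \<Rightarrow> ('q, 'a) node \<Rightarrow> bool" where
  "fin_play G ok x \<longleftrightarrow> cons_path G ok x \<and>
     (TE G x \<or> TA G x \<or> \<not> (\<exists>\<sigma> f. ok x \<sigma> f \<and> inPi G (x @ [(\<sigma>, f)])))"

definition inf_play :: "('q, 'a, 'z) mpg_scheme \<Rightarrow> (('q, 'a) node \<Rightarrow> 'a \<Rightarrow> 'q fn \<Rightarrow> bool)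
    \<Rightarrow> (nat \<Rightarrow> 'a \<times> 'q fn) \<Rightarrow> bool" where
  "inf_play G ok \<rho> \<longleftrightarrow> (\<forall>k. cons_path G ok (map \<rho> [0..<k]))"

definition eve_strategy :: "('q, 'a, 'z) mpg_scheme \<Rightarrow> (('q, 'a) node \<Rightarrow> 'a) \<Rightarrow> bool" where
  "eve_strategy G sE \<longleftrightarrow> (\<forall>x. inPi G x \<longrightarrow> sE x \<in> Sig G)"

definition adam_strategy :: "('q, 'a, 'z) mpg_scheme \<Rightarrow> (('q, 'a) node \<Rightarrow> 'a \<Rightarrow> 'q fn) \<Rightarrow> bool" where
  "adam_strategy G sA \<longleftrightarrow>
     (\<forall>x \<sigma> f. inPi G (x @ [(\<sigma>, f)]) \<longrightarrow> inPi G (x @ [(\<sigma>, sA x \<sigma>)]))"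

definition eve_ok :: "(('q, 'a) node \<Rightarrow> 'a) \<Rightarrow> ('q, 'a) node \<Rightarrow> 'a \<Rightarrow> 'q fn \<Rightarrow> bool" where
  "eve_ok sE x \<sigma> f \<longleftrightarrow> \<sigma> = sE x"

definition adam_ok :: "(('q, 'a) node \<Rightarrow> 'a \<Rightarrow> 'q fn) \<Rightarrow> ('q, 'a) node \<Rightarrow> 'a \<Rightarrow> 'q fn \<Rightarrow> bool" where
  "adam_ok sA x \<sigma> f \<longleftrightarrow> f = sA x \<sigma>"

definition winning :: "('q, 'a, 'z) mpg_scheme \<Rightarrow> (('q, 'a) node \<Rightarrow> 'a \<Rightarrow> 'q fn \<Rightarrow> bool)
    \<Rightarrow> (('q, 'a, 'z) mpg_scheme \<Rightarrow> ('q, 'a) node \<Rightarrow> bool) \<Rightarrow> bool" where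
  "winning G ok T \<longleftrightarrow> (\<nexists>\<rho>. inf_play G ok \<rho>) \<and> (\<forall>x. fin_play G ok x \<longrightarrow> T G x)"

end

theory Submission
  imports Defs
begin

text \<open>The histories consistent with a strategy form a prefix-closed tree of lists. It is finitely
  branching: there are finitely many letters, and a function has only finitely many
  \<open>\<sigma>\<close>-successors, since their support lies in the finite set \<open>Q\<close> and each value is \<open>\<bottom>\<close>,
  \<open>+\<infinity>\<close> or one of finitely many candidate minima. A winning strategy admits no infinite play,
  i.e. the tree has no infinite branch, so by Koenig's lemma it is finite and the length of its
  longest history bounds every play.\<close>

lemma ex_snoc_infinite_extensions:
  fixes P :: "'b list \<Rightarrow> bool"
  assumes prefix_closed: "\<And>xs ys. P (xs @ ys) \<Longrightarrow> P xs"
    and finitely_branching: "finite {a. P (xs @ [a])}"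
    and "infinite {ys. P (xs @ ys)}"
  shows "\<exists>a. infinite {ys. P ((xs @ [a]) @ ys)}"
proof (rule ccontr)
  assume "\<nexists>a. infinite {ys. P ((xs @ [a]) @ ys)}"
  then have "finite ({[]} \<union> (\<Union>a\<in>{a. P (xs @ [a])}. (#) a ` {ys. P ((xs @ [a]) @ ys)}))"
    using finitely_branching by auto
  moreover have "{ys. P (xs @ ys)} \<subseteq> {[]} \<union> (\<Union>a\<in>{a. P (xs @ [a])}. (#) a ` {ys. P ((xs @ [a]) @ ys)})"
  proof
    fix ys assume "ys \<in> {ys. P (xs @ ys)}"
    then show "ys \<in> {[]} \<union> (\<Union>a\<in>{a. P (xs @ [a])}. (#) a ` {ys. P ((xs @ [a]) @ ys)})"
    proof (cases ys)
      case (Cons a zs)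
      with \<open>ys \<in> {ys. P (xs @ ys)}\<close> have "P ((xs @ [a]) @ zs)"
        by simp
      then show ?thesis
        using Cons prefix_closed by blast
    qed simp
  qed
  ultimately show False
    using assms(3) finite_subset by blast
qed

lemma finite_prefix_closed_if_no_infinite_branch:
  fixes P :: "'b list \<Rightarrow> bool"
  assumes prefix_closed: "\<And>xs ys. P (xs @ ys) \<Longrightarrow> P xs"
    and finitely_branching: "\<And>xs. finite {a. P (xs @ [a])}"
    and no_branch: "\<nexists>\<rho>. \<forall>k. P (map \<rho> [0..<k])"
  shows "finite {xs. P xs}"
proof (rule ccontr)
  assume "infinite {xs. P xs}"
  have "\<exists>path. \<forall>n. (length (path n) = n \<and> infinite {ys. P (path n @ ys)})
      \<and> (\<exists>a. path (Suc n) = path n @ [a])"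
  proof (rule dependent_nat_choice[where P = "\<lambda>n xs. length xs = n \<and> infinite {ys. P (xs @ ys)}"
        and Q = "\<lambda>_ xs xs'. \<exists>a. xs' = xs @ [a]"])
    show "\<exists>xs. length xs = 0 \<and> infinite {ys. P (xs @ ys)}"
      using \<open>infinite {xs. P xs}\<close> by simp
    fix xs n assume "length xs = n \<and> infinite {ys. P (xs @ ys)}"
    moreover obtain a where "infinite {ys. P ((xs @ [a]) @ ys)}"
      using ex_snoc_infinite_extensions[of P xs] prefix_closed finitely_branching calculation by blast
    ultimately show "\<exists>xs'. (length xs' = Suc n \<and> infinite {ys. P (xs' @ ys)}) \<and> (\<exists>a. xs' = xs @ [a])"
      by (intro exI[of _ "xs @ [a]"]) auto
  qed
  then obtain path where path: "\<And>n. length (path n) = n \<and> infinite {ys. P (path n @ ys)}"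
    and path_Suc: "\<And>n. \<exists>a. path (Suc n) = path n @ [a]"
    by blast
  have "map (\<lambda>n. last (path (Suc n))) [0..<k] = path k" for k
  proof (induction k)
    case 0
    then show ?case using path[of 0] by simp
  next
    case (Suc k)
    then show ?case using path_Suc[of k] by auto
  qed
  moreover have "P (path k)" for k
    using path[of k] not_finite_existsD prefix_closed by blast
  ultimately show False
    using no_branch by metis
qed

lemma fseq_append: "i \<le> length xs \<Longrightarrow> fseq G (xs @ ys) i = fseq G xs i"
  by (auto simp: fseq_def nth_append)

lemma inPi_appendD:
  assumes "inPi G (xs @ ys)"
  shows "inPi G xs"
  unfolding inPi_def
proof (rule conjI; intro allI impI)
  fix i assume i: "i < length xs"
  then have "fst ((xs @ ys) ! i) \<in> Sig G \<and>
      succ G (fst ((xs @ ys) ! i)) (fseq G (xs @ ys) i) (fseq G (xs @ ys) (Suc i))"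
    using assms unfolding inPi_def by simp
  then show "fst (xs ! i) \<in> Sig G \<and> succ G (fst (xs ! i)) (fseq G xs i) (fseq G xs (Suc i))"
    using i by (simp add: nth_append fseq_append)
next
  fix i j assume ij: "i < j \<and> j < length xs"
  then have "i < j \<and> j < length (xs @ ys)"
    by simp
  then have "\<not> preceq 0 (fseq G (xs @ ys) i) (fseq G (xs @ ys) j) \<and>
      \<not> preceq 1 (fseq G (xs @ ys) j) (fseq G (xs @ ys) i)"
    using assms unfolding inPi_def by blast
  then show "\<not> preceq 0 (fseq G xs i) (fseq G xs j) \<and> \<not> preceq 1 (fseq G xs j) (fseq G xs i)"
    using ij by (simp add: fseq_append)
qed

lemma cons_path_appendD:
  assumes "cons_path G ok (xs @ ys)"
  shows "cons_path G ok xs"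
  unfolding cons_path_def
proof (intro conjI allI impI)
  show "inPi G xs"
    using assms unfolding cons_path_def by (blast dest: inPi_appendD)
next
  fix k assume k: "k < length xs"
  then have "k < length (xs @ ys)"
    by simp
  then have "ok (take k (xs @ ys)) (fst ((xs @ ys) ! k)) (snd ((xs @ ys) ! k))"
    and "\<not> TE G (take k (xs @ ys))" and "\<not> TA G (take k (xs @ ys))"
    using assms unfolding cons_path_def by blast+
  then show "ok (take k xs) (fst (xs ! k)) (snd (xs ! k))"
    and "\<not> TE G (take k xs)" and "\<not> TA G (take k xs)"
    using k by (simp_all add: nth_append)
qed

lemma inPi_snocD:
  assumes "inPi G (xs @ [(\<sigma>, f)])"
  shows "\<sigma> \<in> Sig G \<and> succ G \<sigma> (fseq G xs (length xs)) f"
proof -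
  have "length xs < length (xs @ [(\<sigma>, f)])"
    by simp
  then have "fst ((xs @ [(\<sigma>, f)]) ! length xs) \<in> Sig G \<and>
      succ G (fst ((xs @ [(\<sigma>, f)]) ! length xs))
        (fseq G (xs @ [(\<sigma>, f)]) (length xs)) (fseq G (xs @ [(\<sigma>, f)]) (Suc (length xs)))"
    using assms unfolding inPi_def by blast
  then show ?thesis
    by (simp add: fseq_append) (simp add: fseq_def)
qed

lemma mpg_loD:
  assumes "mpg_lo G"
  shows "finite (Q G)" "finite (Sig G)" "\<Union>(Obs G) = Q G" "Delta G \<subseteq> Q G \<times> Sig G \<times> Q G"
  using assms unfolding mpg_lo_def by argo+

lemma finite_succ:
  assumes "mpg_lo G"
  shows "finite {f'. succ G \<sigma> f f'}"
proof -
  define V where "V = insert None (insert (Some PInf) (Some ` (\<Union>q\<in>Q G. cands G \<sigma> f q)))"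
  have "cands G \<sigma> f q \<subseteq> (\<lambda>q'. vadd (the (f q')) (w G (q', \<sigma>, q))) ` Q G" for q
    using mpg_loD(4)[OF assms] unfolding cands_def by force
  then have "finite V"
    unfolding V_def using mpg_loD(1)[OF assms]
    by (meson finite_UN_I finite_imageI finite_insert finite_subset)
  moreover have "f' q \<in> V \<and> (q \<notin> Q G \<longrightarrow> f' q = None)" if "succ G \<sigma> f f'" for f' q
  proof (cases "q \<in> supp f'")
    case True
    then have "q \<in> Q G"
      using that mpg_loD(3)[OF assms] unfolding succ_def by blast
    moreover have "f' q = Some PInf \<or> (\<exists>v. f' q = Some v \<and> v \<in> cands G \<sigma> f q)"
      using that True unfolding succ_def is_min_def by blast
    ultimately show ?thesis
      unfolding V_def by blast
  next
    case False
    then show ?thesis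
      unfolding V_def supp_def by simp
  qed
  ultimately have "{f'. succ G \<sigma> f f'} \<subseteq> {f'. \<forall>q. (q \<in> Q G \<longrightarrow> f' q \<in> V) \<and> (q \<notin> Q G \<longrightarrow> f' q = None)}"
    by blast
  then show ?thesis
    using finite_set_of_finite_funs[OF mpg_loD(1)[OF assms] \<open>finite V\<close>] by (rule finite_subset)
qed

lemma finite_cons_path_snoc:
  assumes "mpg_lo G"
  shows "finite {a. cons_path G ok (xs @ [a])}"
proof -
  have "{a. cons_path G ok (xs @ [a])} \<subseteq> (SIGMA \<sigma>:Sig G. {f. succ G \<sigma> (fseq G xs (length xs)) f})"
    unfolding cons_path_def by (auto dest: inPi_snocD)
  moreover have "finite (SIGMA \<sigma>:Sig G. {f. succ G \<sigma> (fseq G xs (length xs)) f})"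
    using mpg_loD(2)[OF assms] finite_succ[OF assms] by blast
  ultimately show ?thesis
    by (rule finite_subset)
qed

lemma finite_cons_path:
  assumes "mpg_lo G" and "\<nexists>\<rho>. inf_play G ok \<rho>"
  shows "finite {x. cons_path G ok x}"
  using finite_prefix_closed_if_no_infinite_branch[of "cons_path G ok"]
    cons_path_appendD finite_cons_path_snoc[OF assms(1)] assms(2)
  unfolding inf_play_def by blast

lemma fin_play_length_bounded:
  assumes "mpg_lo G" and "\<nexists>\<rho>. inf_play G ok \<rho>"
  shows "\<exists>N. \<forall>x. fin_play G ok x \<longrightarrow> length x \<le> N"
proof (intro exI allI impI)
  fix x assume "fin_play G ok x"
  then have "length x \<in> length ` {x. cons_path G ok x}"
    unfolding fin_play_def by blast
  then show "length x \<le> Max (length ` {x. cons_path G ok x})"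
    using finite_cons_path[OF assms] by simp
qed

theorem lemma2:
  fixes G :: "('q, 'a) mpg"
    and sE :: "('q, 'a) node \<Rightarrow> 'a"
    and sA :: "('q, 'a) node \<Rightarrow> 'a \<Rightarrow> 'q fn"
  assumes "mpg_lo G"
  shows "(eve_strategy G sE \<and> winning G (eve_ok sE) TE \<longrightarrow>
            (\<exists>N::nat. \<forall>x. fin_play G (eve_ok sE) x \<longrightarrow> length x \<le> N))
       \<and> (adam_strategy G sA \<and> winning G (adam_ok sA) TA \<longrightarrow>
            (\<exists>N::nat. \<forall>x. fin_play G (adam_ok sA) x \<longrightarrow> length x \<le> N))"
  using fin_play_length_bounded[OF assms] unfolding winning_def by blast

end
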